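(* Let examples $(\vec x_1,y_1),(\vec x_2,y_2),\dots$ be drawn i.i.d. from a fixed (stationary) distribution $P$ over labelled examples with nominal attributes $X_1,\dots,X_m$, and run the Hoeffding Anytime Tree (HATT), as defined in the context, with a fixed $\delta\in(0,1)$. Assume each attribute $X_i$ has a finite, constant information gain $G(X_i)^\infty$ at the root under $P$, and that no two attributes have identical information gain. Let $X_R^{HATT,t}$ be the split attribute at the root of HATT after $t$ examples and $X_R^{DT_*}$ the split attribute at the root of $DT_*$. Then $P(X_R^{HATT,t}=X_R^{DT_*})\to 1$ as $t\to\infty$.
   Context: $DT_*$ denotes the asymptotic batch decision tree, i.e. the tree a batch learner would build from an infinite dataset drawn from $P$: at each node it splits on the attribute with highest information gain $G(\cdot)^\infty$ computed under the distribution $P$ conditioned on reaching that node. Each HATT node keeps counts $n_{ijk}$ of examples with value $x_{ij}$ of attribute $X_i$ and class $y_k$ among the examples that have reached it; from these one computes the estimated information gain $\overline G(X_i)$. A null split $X_\emptyset$ denotes not splitting; $\overline G(X_\emptyset)$ is the merit of predicting the most frequent class at the node. With $n$ the number of examples seen at a node and $R$ the range of $G$, $\epsilon=\sqrt{R^2\ln(1/\delta)/(2n)}$. HATT: each example is sorted to a leaf and the counts of every node on the path from the root to that leaf are updated. At the leaf: if not all examples there have the same class, let $X_a$ be the non-null attribute with highest $\overline G$; if $\overline G(X_a)-\overline G(X_\emptyset)>\epsilon$, replace the leaf by an internal node splitting on $X_a$ with fresh leaves as children (attribute set excluding $X_a$, counts zero). At each internal node on the path with current split attribute $X_{current}$: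 let $X_a$ be the attribute with highest $\overline G$ (including $X_\emptyset$); if $\overline G(X_a)-\overline G(X_{current})>\epsilon$, then if $X_a=X_\emptyset$ the node is replaced by a leaf (its subtree discarded), and otherwise, if $X_a\ne X_{current}$, it is replaced by an internal node splitting on $X_a$ with fresh leaves as children. *)

theory Defs
  imports "HOL-Probability.Probability"
begin

type_synonym ('a, 'v, 'c) example = "('a \<Rightarrow> 'v) \<times> 'c"

definition cent :: "('c::finite \<Rightarrow> real) \<Rightarrow> real" where
  "cent w = (let N = (\<Sum>k\<in>UNIV. w k) in
     - (\<Sum>k\<in>UNIV. if w k = 0 then 0 else (w k / N) * log 2 (w k / N)))"

definition igain :: "(('a::finite, 'v::finite, 'c::finite) example set \<Rightarrow> real) \<Rightarrow> 'a \<Rightarrow> real" where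
  "igain mu i = cent (\<lambda>k. mu {e. snd e = k})
     - (\<Sum>v\<in>UNIV. (mu {e. fst e i = v} / mu UNIV) * cent (\<lambda>k. mu {e. fst e i = v \<and> snd e = k}))"

definition Ginf :: "('a::finite, 'v::finite, 'c::finite) example pmf \<Rightarrow> 'a \<Rightarrow> real" where
  "Ginf P i = igain (measure_pmf.prob P) i"

definition dt_root :: "('a::finite, 'v::finite, 'c::finite) example pmf \<Rightarrow> 'a" where
  "dt_root P = (ARG_MAX (Ginf P) a. True)"

definition Gbar :: "('a::finite, 'v::finite, 'c::finite) example list \<Rightarrow> 'a \<Rightarrow> real" where
  "Gbar S i = igain (\<lambda>A. real (length (filter (\<lambda>e. e \<in> A) S))) i"

text \<open>Estimated merit of the null split (not splitting): information gain 0.\<close>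
definition Gbar_opt :: "('a::finite, 'v::finite, 'c::finite) example list \<Rightarrow> 'a option \<Rightarrow> real" where
  "Gbar_opt S a = (case a of None \<Rightarrow> 0 | Some i \<Rightarrow> Gbar S i)"

definition Rng :: "'c::finite itself \<Rightarrow> real" where
  "Rng _ = log 2 (real CARD('c))"

definition hoeff_eps :: "'c::finite itself \<Rightarrow> real \<Rightarrow> nat \<Rightarrow> real" where
  "hoeff_eps c \<delta> n = sqrt ((Rng c)\<^sup>2 * ln (1 / \<delta>) / (2 * real n))"

text \<open>HATT trees: every node keeps its attribute set and the examples that reached it
  (from which the counts n_ijk are computed).\<close>
datatype ('a, 'v, 'c) htree =
    Leaf "'a set" "('a, 'v, 'c) example list"
  | Node 'a "'a set" "('a, 'v, 'c) example list" "'v \<Rightarrow> ('a, 'v, 'c) htree"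

definition leaf_upd :: "real \<Rightarrow> 'a::finite set \<Rightarrow> ('a, 'v::finite, 'c::finite) example list
    \<Rightarrow> ('a, 'v, 'c) htree" where
  "leaf_upd \<delta> A S =
    (if A \<noteq> {} \<and> (\<exists>e\<in>set S. \<exists>e'\<in>set S. snd e \<noteq> snd e') then
       (let a = (ARG_MAX (Gbar S) i. i \<in> A) in
        if Gbar S a - Gbar_opt S None > hoeff_eps TYPE('c) \<delta> (length S)
        then Node a A S (\<lambda>v. Leaf (A - {a}) [])
        else Leaf A S)
     else Leaf A S)"

definition node_upd :: "real \<Rightarrow> 'a::finite \<Rightarrow> 'a set \<Rightarrow> ('a, 'v::finite, 'c::finite) example list
    \<Rightarrow> ('v \<Rightarrow> ('a, 'v, 'c) htree) \<Rightarrow> ('a, 'v, 'c) htree" where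
  "node_upd \<delta> c A S ch =
    (let a = (ARG_MAX (Gbar_opt S) b. b \<in> insert None (Some ` A)) in
     if Gbar_opt S a - Gbar_opt S (Some c) > hoeff_eps TYPE('c) \<delta> (length S) then
       (case a of None \<Rightarrow> Leaf A S
        | Some b \<Rightarrow> (if b \<noteq> c then Node b A S (\<lambda>v. Leaf (A - {b}) []) else Node c A S ch))
     else Node c A S ch)"

text \<open>The boolean flag says whether the node lies on the example's path (nodes off the path
  are left unchanged).\<close>
primrec hstep_on :: "real \<Rightarrow> ('a::finite, 'v::finite, 'c::finite) example \<Rightarrow> ('a, 'v, 'c) htree
    \<Rightarrow> bool \<Rightarrow> ('a, 'v, 'c) htree" where
  "hstep_on \<delta> e (Leaf A S) b = (if b then leaf_upd \<delta> A (S @ [e]) else Leaf A S)"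
| "hstep_on \<delta> e (Node c A S ch) b =
     (if b then node_upd \<delta> c A (S @ [e]) (\<lambda>v. hstep_on \<delta> e (ch v) (v = fst e c))
      else Node c A S ch)"

definition hstep :: "real \<Rightarrow> ('a::finite, 'v::finite, 'c::finite) example \<Rightarrow> ('a, 'v, 'c) htree
    \<Rightarrow> ('a, 'v, 'c) htree" where
  "hstep \<delta> e T = hstep_on \<delta> e T True"

definition hatt :: "real \<Rightarrow> (nat \<Rightarrow> ('a::finite, 'v::finite, 'c::finite) example) \<Rightarrow> nat
    \<Rightarrow> ('a, 'v, 'c) htree" where
  "hatt \<delta> \<omega> t = fold (hstep \<delta>) (map \<omega> [0..<t]) (Leaf UNIV [])"

text \<open>Split attribute at the root (None if the root is a leaf, i.e. the null split).\<close>
fun root_attr :: "('a, 'v, 'c) htree \<Rightarrow> 'a option" where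
  "root_attr (Leaf _ _) = None"
| "root_attr (Node c _ _ _) = Some c"

end

theory Submission
  imports Defs "HOL-Real_Asymp.Real_Asymp"
begin

text \<open>
  Multiplying the class entropy by the total mass turns the information gain into a sum of terms
  \<open>x log x\<close>, i.e. into a function of the example probabilities that is continuous everywhere,
  also where some class or attribute value has probability zero. The estimated gains at the root
  are this function at the empirical frequencies of the examples seen so far. By Hoeffding's
  inequality and a union bound over the finitely many examples, with probability tending to one
  these frequencies lie within any fixed \<open>\<eta> > 0\<close> of the true probabilities, so every estimated
  gain lies within a third of the smallest gap between the gain of the root attribute \<open>d\<close> of
  \<open>DT\<^sub>*\<close>, zero and the other gains. As \<open>\<epsilon> \<rightarrow> 0\<close>, eventually \<open>\<epsilon>\<close> is below that third as well;
  then \<open>d\<close> beats the null split and every other attribute by more than \<open>\<epsilon>\<close>, so whatever the root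
  was before, processing the latest example makes it split on \<open>d\<close>.
\<close>

section \<open>Information gain as a continuous function of the example distribution\<close>

definition xlogx :: "real \<Rightarrow> real" where
  "xlogx x = x * log 2 x"

lemma isCont_xlogx: "isCont xlogx x"
proof (cases "x = 0")
  case True
  have "((\<lambda>x::real. x * ln x) \<longlongrightarrow> 0) (at_right 0)" by real_asymp
  moreover have "((\<lambda>x::real. x * ln x) \<longlongrightarrow> 0) (at_left 0)"
  proof -
    have "((\<lambda>x::real. - (x * ln x)) \<longlongrightarrow> 0) (at_right 0)" by real_asymp
    then show ?thesis unfolding filterlim_at_left_to_right[of _ _ 0] by (simp add: ln_minus)
  qed
  ultimately have "((\<lambda>x::real. x * ln x) \<longlongrightarrow> 0) (at 0)"
    by (simp add: filterlim_split_at)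
  then have "((\<lambda>x::real. x * ln x / ln 2) \<longlongrightarrow> 0) (at 0)"
    by (auto intro: tendsto_eq_intros)
  then show ?thesis using True unfolding isCont_def xlogx_def log_def by (simp add: mult.commute)
next
  case False
  then show ?thesis unfolding xlogx_def log_def by (intro continuous_intros) auto
qed

definition scaled_cent :: "('c::finite \<Rightarrow> real) \<Rightarrow> real" where
  "scaled_cent w = xlogx (\<Sum>k\<in>UNIV. w k) - (\<Sum>k\<in>UNIV. xlogx (w k))"

lemma sum_mult_cent:
  fixes w :: "'c::finite \<Rightarrow> real"
  assumes nonneg: "\<And>k. w k \<ge> 0"
  shows "(\<Sum>k\<in>UNIV. w k) * cent w = scaled_cent w"
proof (cases "(\<Sum>k\<in>UNIV. w k) = 0")
  case True
  then have "\<forall>k. w k = 0" using sum_nonneg_eq_0_iff[of UNIV w] nonneg by auto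
  then show ?thesis by (simp add: cent_def scaled_cent_def xlogx_def)
next
  case False
  define N where "N = (\<Sum>k\<in>UNIV. w k)"
  have "N > 0" using False nonneg unfolding N_def by (metis order_less_le sum_nonneg)
  have term_eq: "N * (if w k = 0 then 0 else (w k / N) * log 2 (w k / N))
      = xlogx (w k) - w k * log 2 N" for k
  proof (cases "w k = 0")
    case False
    then have "w k > 0" using nonneg[of k] by auto
    with \<open>N > 0\<close> show ?thesis by (simp add: xlogx_def log_divide algebra_simps)
  qed (simp add: xlogx_def)
  have "N * cent w = - (\<Sum>k\<in>UNIV. N * (if w k = 0 then 0 else (w k / N) * log 2 (w k / N)))"
    by (simp add: cent_def Let_def N_def[symmetric] sum_distrib_left)
  also have "\<dots> = - (\<Sum>k\<in>UNIV. xlogx (w k) - w k * log 2 N)"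
    using term_eq by simp
  also have "\<dots> = - (\<Sum>k\<in>UNIV. xlogx (w k)) + N * log 2 N"
    by (simp add: sum_subtractf sum_distrib_right[symmetric] N_def)
  finally show ?thesis by (simp add: N_def scaled_cent_def xlogx_def)
qed

lemma cent_nonneg:
  fixes w :: "'c::finite \<Rightarrow> real"
  assumes nonneg: "\<And>k. w k \<ge> 0"
  shows "cent w \<ge> 0"
proof -
  define N where "N = (\<Sum>k\<in>UNIV. w k)"
  have "(if w k = 0 then 0 else (w k / N) * log 2 (w k / N)) \<le> 0" for k
  proof (cases "w k = 0")
    case False
    then have "w k > 0" using nonneg[of k] by auto
    moreover have "w k \<le> N" unfolding N_def using nonneg by (intro member_le_sum) auto
    ultimately have "w k / N > 0" "log 2 (w k / N) \<le> 0" by auto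
    then have "(w k / N) * log 2 (w k / N) \<le> 0" by (intro mult_nonneg_nonpos) auto
    then show ?thesis using False by simp
  qed simp
  then show ?thesis by (simp add: cent_def Let_def N_def[symmetric] sum_nonpos)
qed

lemma cent_scale:
  fixes w :: "'c::finite \<Rightarrow> real"
  assumes "c > 0"
  shows "cent (\<lambda>k. c * w k) = cent w"
proof -
  have ratio: "c * w k / (c * sum w UNIV) = w k / sum w UNIV" for k
    using assms by simp
  show ?thesis unfolding cent_def Let_def sum_distrib_left[symmetric] ratio using assms by simp
qed

lemma igain_scale:
  fixes mu :: "('a::finite, 'v::finite, 'c::finite) example set \<Rightarrow> real"
  assumes "c > 0"
  shows "igain (\<lambda>A. c * mu A) i = igain mu i"
  using assms by (simp add: igain_def cent_scale)

definition igain_weights :: "(('a::finite, 'v::finite, 'c::finite) example \<Rightarrow> real) \<Rightarrow> 'a \<Rightarrow> real"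
  where
  "igain_weights q i = scaled_cent (\<lambda>k. sum q {e. snd e = k})
     - (\<Sum>v\<in>UNIV. scaled_cent (\<lambda>k. sum q {e. fst e i = v \<and> snd e = k}))"

lemma igain_sum_eq_igain_weights:
  fixes q :: "('a::finite, 'v::finite, 'c::finite) example \<Rightarrow> real"
  assumes nonneg: "\<And>x. q x \<ge> 0" and total: "sum q UNIV = 1"
  shows "igain (sum q) i = igain_weights q i"
proof -
  have classes: "(\<Sum>k\<in>UNIV. sum q {e. snd e = k}) = 1"
    using sum.group[of UNIV UNIV snd q] total by simp
  have value_classes: "sum q {e. fst e i = v} = (\<Sum>k\<in>UNIV. sum q {e. fst e i = v \<and> snd e = k})"
    for v
    using sum.group[of "{e. fst e i = v}" UNIV snd q] by simp
  show ?thesis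
    using sum_mult_cent[of "\<lambda>k. sum q {e. snd e = k}"]
      sum_mult_cent[of "\<lambda>k. sum q {e. fst e i = v \<and> snd e = k}" for v]
    unfolding igain_def igain_weights_def classes value_classes[symmetric] total
    by (simp add: nonneg sum_nonneg)
qed

lemma Ginf_eq_igain_weights: "Ginf P i = igain_weights (pmf P) i"
  unfolding Ginf_def measure_measure_pmf_finite[OF finite]
  by (rule igain_sum_eq_igain_weights) (auto intro: sum_pmf_eq_1)

lemma igain_weights_uniformly_close:
  fixes p :: "('a::finite, 'v::finite, 'c::finite) example \<Rightarrow> real"
  assumes "\<epsilon> > 0"
  shows "\<exists>\<eta>>0. \<forall>q. (\<forall>x. \<bar>q x - p x\<bar> < \<eta>) \<longrightarrow> (\<forall>i. \<bar>igain_weights q i - igain_weights p i\<bar> < \<epsilon>)"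
proof (rule ccontr)
  assume "\<not> ?thesis"
  then have "\<forall>n. \<exists>q. (\<forall>x. \<bar>q x - p x\<bar> < 1 / Suc n)
      \<and> \<not> (\<forall>i. \<bar>igain_weights q i - igain_weights p i\<bar> < \<epsilon>)"
    by (metis of_nat_0_less_iff zero_less_Suc zero_less_divide_1_iff)
  then obtain Q where Q_close: "\<And>n x. \<bar>Q n x - p x\<bar> < 1 / Suc n"
    and Q_far: "\<And>n. \<not> (\<forall>i. \<bar>igain_weights (Q n) i - igain_weights p i\<bar> < \<epsilon>)"
    by metis
  have "(\<lambda>n. Q n x) \<longlonglongrightarrow> p x" for x
  proof -
    have "(\<lambda>n. Q n x - p x) \<longlonglongrightarrow> 0"
    proof (rule Lim_null_comparison)
      show "\<forall>\<^sub>F n in sequentially. norm (Q n x - p x) \<le> 1 / Suc n"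
        using Q_close[of _ x] by (intro always_eventually allI) (simp add: less_imp_le)
      show "(\<lambda>n. 1 / real (Suc n)) \<longlonglongrightarrow> 0" by real_asymp
    qed
    then show ?thesis by (simp add: LIM_zero_iff)
  qed
  then have "(\<lambda>n. igain_weights (Q n) i) \<longlonglongrightarrow> igain_weights p i" for i
    unfolding igain_weights_def scaled_cent_def
    by (intro tendsto_intros isCont_tendsto_compose[OF isCont_xlogx])
  then have "\<forall>\<^sub>F n in sequentially. \<bar>igain_weights (Q n) i - igain_weights p i\<bar> < \<epsilon>" for i
    using assms by (simp add: tendsto_iff dist_real_def)
  then have "\<forall>\<^sub>F n in sequentially. \<forall>i. \<bar>igain_weights (Q n) i - igain_weights p i\<bar> < \<epsilon>"
    by (rule eventually_all_finite)
  then show False using Q_far by (simp add: eventually_sequentially)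
qed

definition freq :: "'e list \<Rightarrow> 'e \<Rightarrow> real" where
  "freq S x = count_list S x / length S"

lemma length_filter_eq_sum_count_list:
  "real (length (filter (\<lambda>e. e \<in> A) S)) = sum (\<lambda>x. real (count_list S x)) A"
  for S :: "'e::finite list"
proof (induction S)
  case (Cons a S)
  have "real (count_list (a # S) x) = real (count_list S x) + (if a = x then 1 else 0)" for x
    by simp
  then have "sum (\<lambda>x. real (count_list (a # S) x)) A
      = sum (\<lambda>x. real (count_list S x)) A + sum (\<lambda>x. if a = x then 1 else 0) A"
    by (simp add: sum.distrib)
  also have "sum (\<lambda>x. if a = x then 1 else 0) A = (if a \<in> A then 1 else 0 :: real)"
    by (simp add: sum.delta)
  finally show ?case using Cons by simp
qed simp

lemma Gbar_eq_igain_weights_freq: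
  fixes S :: "('a::finite, 'v::finite, 'c::finite) example list"
  assumes "S \<noteq> []"
  shows "Gbar S i = igain_weights (freq S) i"
proof -
  define n where "n = real (length S)"
  have "n > 0" using assms by (simp add: n_def)
  have "(\<lambda>A. real (length (filter (\<lambda>e. e \<in> A) S))) = (\<lambda>A. n * sum (freq S) A)"
    using \<open>n > 0\<close> by (simp add: length_filter_eq_sum_count_list freq_def sum_distrib_left n_def)
  then have "Gbar S i = igain (sum (freq S)) i"
    unfolding Gbar_def using igain_scale[OF \<open>n > 0\<close>] by simp
  also have "\<dots> = igain_weights (freq S) i"
  proof (rule igain_sum_eq_igain_weights)
    show "0 \<le> freq S x" for x by (simp add: freq_def)
    have "sum (\<lambda>x. real (count_list S x)) UNIV = n"
      using length_filter_eq_sum_count_list[of UNIV S] by (simp add: n_def)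
    with \<open>n > 0\<close> show "sum (freq S) UNIV = 1"
      by (simp add: freq_def sum_divide_distrib[symmetric] n_def)
  qed
  finally show ?thesis .
qed

lemma Gbar_nonpos_if_one_class:
  fixes S :: "('a::finite, 'v::finite, 'c::finite) example list"
  assumes "\<forall>e\<in>set S. snd e = k0"
  shows "Gbar S i \<le> 0"
proof -
  let ?w = "\<lambda>k. if k = k0 then real (length S) else 0"
  have classes: "(\<lambda>k. real (length (filter (\<lambda>e. e \<in> {e. snd e = k}) S))) = ?w"
    using assms by (auto simp: filter_empty_conv)
  have "(if ?w k = 0 then 0 else (?w k / length S) * log 2 (?w k / length S)) = 0" for k
    by auto
  then have "cent ?w = 0" by (simp add: cent_def Let_def sum.delta')
  moreover have "0 \<le> (\<Sum>v\<in>UNIV.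
      (real (length (filter (\<lambda>e. e \<in> {e. fst e i = v}) S)) / real (length (filter (\<lambda>e. e \<in> UNIV) S)))
      * cent (\<lambda>k. real (length (filter (\<lambda>e. e \<in> {e. fst e i = v \<and> snd e = k}) S))))"
    by (intro sum_nonneg mult_nonneg_nonneg cent_nonneg) auto
  ultimately show ?thesis unfolding Gbar_def igain_def classes by linarith
qed

section \<open>The root of HATT\<close>

fun node_examples :: "('a, 'v, 'c) htree \<Rightarrow> ('a, 'v, 'c) example list" where
  "node_examples (Leaf _ S) = S"
| "node_examples (Node _ _ S _) = S"

fun node_attrs :: "('a, 'v, 'c) htree \<Rightarrow> 'a set" where
  "node_attrs (Leaf A _) = A"
| "node_attrs (Node _ A _ _) = A"

lemma hatt_Suc: "hatt \<delta> \<omega> (Suc t) = hstep \<delta> (\<omega> t) (hatt \<delta> \<omega> t)"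
  by (simp add: hatt_def)

lemma node_examples_hstep: "node_examples (hstep \<delta> e T) = node_examples T @ [e]"
  and node_attrs_hstep: "node_attrs (hstep \<delta> e T) = node_attrs T"
  by (cases T; simp add: hstep_def leaf_upd_def node_upd_def Let_def split: option.split)+

lemma node_examples_hatt: "node_examples (hatt \<delta> \<omega> t) = map \<omega> [0..<t]"
  and node_attrs_hatt: "node_attrs (hatt \<delta> \<omega> t) = UNIV"
  by (induction t) (simp_all add: hatt_Suc node_examples_hstep node_attrs_hstep, simp_all add: hatt_def)

lemma arg_max_eqI:
  fixes f :: "'a \<Rightarrow> 'b::linorder"
  assumes "P d" "\<And>y. P y \<Longrightarrow> y \<noteq> d \<Longrightarrow> f y < f d"
  shows "arg_max f P = d"
  by (rule arg_maxI[where f = f]) (use assms in \<open>force+\<close>)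

definition clear_winner :: "real \<Rightarrow> 'a \<Rightarrow> ('a::finite, 'v::finite, 'c::finite) example list \<Rightarrow> bool"
  where
  "clear_winner \<delta> d S \<longleftrightarrow> hoeff_eps TYPE('c) \<delta> (length S) < Gbar S d
     \<and> (\<forall>i. i \<noteq> d \<longrightarrow> Gbar S i + hoeff_eps TYPE('c) \<delta> (length S) < Gbar S d)"

lemma root_attr_hstep_clear_winner:
  fixes T :: "('a::finite, 'v::finite, 'c::finite) htree"
  assumes winner: "clear_winner \<delta> d (node_examples T @ [e])"
    and attrs: "node_attrs T = UNIV" and "0 < \<delta>" "\<delta> < 1"
  shows "root_attr (hstep \<delta> e T) = Some d"
proof -
  define S where "S = node_examples T @ [e]"
  define \<epsilon> where "\<epsilon> = hoeff_eps TYPE('c) \<delta> (length S)"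
  have beats_null: "\<epsilon> < Gbar S d" and beats: "\<And>i. i \<noteq> d \<Longrightarrow> Gbar S i + \<epsilon> < Gbar S d"
    using winner unfolding clear_winner_def S_def \<epsilon>_def by auto
  have "\<epsilon> \<ge> 0" using \<open>0 < \<delta>\<close> \<open>\<delta> < 1\<close> by (simp add: \<epsilon>_def hoeff_eps_def)
  have less: "Gbar S i < Gbar S d" if "i \<noteq> d" for i
    using beats[OF that] \<open>\<epsilon> \<ge> 0\<close> by linarith
  have best: "arg_max (Gbar S) (\<lambda>i. i \<in> UNIV) = d"
    by (rule arg_max_eqI) (use less in auto)
  have best_opt: "arg_max (Gbar_opt S) (\<lambda>b. b \<in> insert None (Some ` UNIV)) = Some d"
  proof (rule arg_max_eqI)
    fix y assume "y \<in> insert None (Some ` UNIV)" "y \<noteq> Some d"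
    then show "Gbar_opt S y < Gbar_opt S (Some d)"
      using less beats_null \<open>\<epsilon> \<ge> 0\<close> by (cases y) (auto simp: Gbar_opt_def)
  qed simp
  show ?thesis
  proof (cases T)
    case (Leaf A S0)
    have impure: "\<exists>e\<in>set S. \<exists>e'\<in>set S. snd e \<noteq> snd e'"
    proof (rule ccontr)
      assume "\<not> ?thesis"
      moreover have "e \<in> set S" by (simp add: S_def)
      ultimately have "\<forall>x\<in>set S. snd x = snd e" by blast
      then have "Gbar S d \<le> 0" by (rule Gbar_nonpos_if_one_class)
      with beats_null \<open>\<epsilon> \<ge> 0\<close> show False by linarith
    qed
    have "hstep \<delta> e T = leaf_upd \<delta> UNIV S" using Leaf attrs by (simp add: hstep_def S_def)
    also have "\<dots> = Node d UNIV S (\<lambda>v. Leaf (UNIV - {d}) [])"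
      unfolding leaf_upd_def Let_def best using impure beats_null by (simp add: Gbar_opt_def \<epsilon>_def)
    finally show ?thesis by simp
  next
    case (Node c A S0 ch)
    then obtain ch' where step: "hstep \<delta> e T = node_upd \<delta> c UNIV S ch'"
      using attrs by (simp add: hstep_def S_def)
    show ?thesis
    proof (cases "c = d")
      case True
      then show ?thesis unfolding step node_upd_def Let_def best_opt by simp
    next
      case False
      then have "Gbar_opt S (Some d) - Gbar_opt S (Some c) > \<epsilon>"
        using beats[OF False] by (simp add: Gbar_opt_def)
      then show ?thesis unfolding step node_upd_def Let_def best_opt using False by (simp add: \<epsilon>_def)
    qed
  qed
qed

lemma root_attr_hatt_clear_winner:
  fixes \<omega> :: "nat \<Rightarrow> ('a::finite, 'v::finite, 'c::finite) example"
  assumes "clear_winner \<delta> d (map \<omega> [0..<Suc t])" "0 < \<delta>" "\<delta> < 1"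
  shows "root_attr (hatt \<delta> \<omega> (Suc t)) = Some d"
  unfolding hatt_Suc
  by (rule root_attr_hstep_clear_winner) (use assms in \<open>auto simp: node_examples_hatt node_attrs_hatt\<close>)

section \<open>Empirical frequencies of an i.i.d.\ stream\<close>

lemma measurable_prefix:
  fixes P :: "'e::countable pmf"
  shows "(\<lambda>\<omega>. map \<omega> [0..<t]) \<in> PiM UNIV (\<lambda>_::nat. measure_pmf P) \<rightarrow>\<^sub>M count_space UNIV"
proof (induction t)
  case (Suc t)
  have "(\<lambda>\<omega>. \<omega> t) \<in> PiM UNIV (\<lambda>_::nat. measure_pmf P) \<rightarrow>\<^sub>M count_space UNIV"
    using measurable_component_singleton[of t UNIV "\<lambda>_. measure_pmf P"] by simp
  then have "(\<lambda>\<omega>. xs @ [\<omega> t]) \<in> PiM UNIV (\<lambda>_::nat. measure_pmf P) \<rightarrow>\<^sub>M count_space UNIV" for xs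
    by (rule measurable_compose) simp
  then show ?case
    using measurable_compose_countable[OF _ Suc.IH, of "\<lambda>xs \<omega>. xs @ [\<omega> t]"] by simp
qed simp

lemma sets_prefix_event:
  fixes P :: "'e::countable pmf"
  shows "{\<omega>. Q (map \<omega> [0..<t])} \<in> sets (PiM UNIV (\<lambda>_::nat. measure_pmf P))"
  using measurable_sets[OF measurable_prefix[of t P], of "{xs. Q xs}"]
  by (simp add: space_PiM vimage_def)

lemma indep_vars_PiM_components:
  assumes "prob_space M" "finite I" "I \<noteq> {}"
  shows "prob_space.indep_vars (PiM UNIV (\<lambda>_::nat. M)) (\<lambda>_. M) (\<lambda>j \<omega>. \<omega> j) I"
proof -
  interpret product_prob_space "\<lambda>_::nat. M" UNIV
    using assms(1) by (auto simp: product_prob_space_def product_prob_space_axioms_def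
        product_sigma_finite_def prob_space_imp_sigma_finite)
  have "distr (PiM UNIV (\<lambda>_. M)) (PiM I (\<lambda>_. M)) (\<lambda>\<omega>. \<lambda>i\<in>I. \<omega> i) = PiM I (\<lambda>_. M)"
    using distr_PiM_restrict_finite[of I] assms by simp
  also have "\<dots> = PiM I (\<lambda>i. distr (PiM UNIV (\<lambda>_. M)) M (\<lambda>\<omega>. \<omega> i))"
    by (simp add: PiM_component)
  finally show ?thesis
    by (subst prob_space.indep_vars_iff_distr_eq_PiM'[OF prob_space_PiM[OF assms(1)] assms(3)]) auto
qed

lemma count_list_prefix: "count_list (map \<omega> [0..<t]) x = (\<Sum>j\<in>{0..<t}. indicator {x} (\<omega> j) :: real)"
  by (induction t) (auto simp: indicator_def)

lemma prob_freq_prefix_far_le: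
  fixes P :: "'e::countable pmf"
  assumes "t > 0" "\<eta> \<ge> 0"
  shows "measure (PiM UNIV (\<lambda>_::nat. measure_pmf P)) {\<omega>. \<eta> \<le> \<bar>freq (map \<omega> [0..<t]) x - pmf P x\<bar>}
    \<le> 2 * exp (- 2 * real t * \<eta>\<^sup>2)"
proof -
  let ?M = "PiM UNIV (\<lambda>_::nat. measure_pmf P)"
  let ?X = "\<lambda>j \<omega>. indicator {x} (\<omega> j) :: real"
  interpret product_prob_space "\<lambda>_::nat. measure_pmf P" UNIV
    by (auto simp: product_prob_space_def product_prob_space_axioms_def product_sigma_finite_def
        measure_pmf.prob_space_axioms prob_space_imp_sigma_finite)
  have distr_X: "distr ?M borel (?X j) = distr (measure_pmf P) borel (indicator {x})" for j
  proof -
    have "distr ?M borel (?X j) = distr (distr ?M (measure_pmf P) (\<lambda>\<omega>. \<omega> j)) borel (indicator {x})"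
      by (subst distr_distr) (auto simp: comp_def)
    then show ?thesis by (simp add: PiM_component)
  qed
  have mean: "integral\<^sup>L ?M (?X 0) = pmf P x"
  proof -
    have "integral\<^sup>L ?M (?X 0) = integral\<^sup>L (distr ?M (measure_pmf P) (\<lambda>\<omega>. \<omega> 0)) (indicator {x})"
      by (subst integral_distr) auto
    then show ?thesis by (simp add: PiM_component measure_pmf_single)
  qed
  interpret Hoeffding_ineq_iid ?M "{0..<t}" ?X "?X 0" 0 1 "pmf P x"
  proof unfold_locales
    have components: "prob_space.indep_vars ?M (\<lambda>_. measure_pmf P) (\<lambda>j \<omega>. \<omega> j) {0..<t}"
      by (rule indep_vars_PiM_components) (use assms(1) in \<open>auto intro: measure_pmf.prob_space_axioms\<close>)
    show "prob_space.indep_vars ?M (\<lambda>_. borel) ?X {0..<t}"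
      using prob_space.indep_vars_compose2[OF prob_space_PiM[OF measure_pmf.prob_space_axioms] components,
          of "\<lambda>_. indicator {x}" "\<lambda>_. borel"]
      by simp
  qed (use mean distr_X in \<open>simp_all add: indicator_def\<close>)
  have "prob {\<omega>\<in>space ?M. \<bar>(\<Sum>j\<in>{0..<t}. ?X j \<omega>) / real (card {0..<t}) - pmf P x\<bar> \<ge> \<eta>}
      \<le> 2 * exp (-2 * real (card {0..<t}) * \<eta>\<^sup>2 / (1 - 0)\<^sup>2)"
    by (rule Hoeffding_ineq_abs_ge'[OF assms(2)]) (use assms(1) in auto)
  then show ?thesis by (simp add: freq_def count_list_prefix space_PiM)
qed

lemma prob_freq_prefix_close_tendsto_1:
  fixes P :: "'e::finite pmf"
  assumes "\<eta> > 0"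
  shows "(\<lambda>t. measure (PiM UNIV (\<lambda>_::nat. measure_pmf P))
    {\<omega>. \<forall>x. \<bar>freq (map \<omega> [0..<t]) x - pmf P x\<bar> < \<eta>}) \<longlonglongrightarrow> 1"
proof (rule tendsto_sandwich[OF _ _ _ tendsto_const])
  let ?M = "PiM UNIV (\<lambda>_::nat. measure_pmf P)"
  interpret prob_space ?M by (rule prob_space_PiM) (rule measure_pmf.prob_space_axioms)
  let ?far = "\<lambda>t x. {\<omega>. \<eta> \<le> \<bar>freq (map \<omega> [0..<t]) x - pmf P x\<bar>}"
  show "(\<lambda>t. 1 - 2 * real CARD('e) * exp (- 2 * real t * \<eta>\<^sup>2)) \<longlonglongrightarrow> 1"
    using assms by real_asymp
  show "\<forall>\<^sub>F t in sequentially. 1 - 2 * real CARD('e) * exp (- 2 * real t * \<eta>\<^sup>2)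
      \<le> prob {\<omega>. \<forall>x. \<bar>freq (map \<omega> [0..<t]) x - pmf P x\<bar> < \<eta>}"
  proof (rule eventually_sequentiallyI[of 1])
    fix t :: nat assume "t \<ge> 1"
    have far_sets: "?far t x \<in> events" for x by (rule sets_prefix_event)
    have "prob (\<Union>x. ?far t x) \<le> (\<Sum>x\<in>UNIV. prob (?far t x))"
      by (rule finite_measure_subadditive_finite) (auto simp: far_sets)
    also have "\<dots> \<le> (\<Sum>x\<in>(UNIV::'e set). 2 * exp (- 2 * real t * \<eta>\<^sup>2))"
      by (intro sum_mono prob_freq_prefix_far_le) (use \<open>t \<ge> 1\<close> assms in auto)
    finally have "1 - 2 * real CARD('e) * exp (- 2 * real t * \<eta>\<^sup>2) \<le> 1 - prob (\<Union>x. ?far t x)"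
      by simp
    also have "1 - prob (\<Union>x. ?far t x) = prob (space ?M - (\<Union>x. ?far t x))"
      by (rule prob_compl[symmetric]) (auto simp: far_sets)
    also have "space ?M - (\<Union>x. ?far t x) = {\<omega>. \<forall>x. \<bar>freq (map \<omega> [0..<t]) x - pmf P x\<bar> < \<eta>}"
      by (auto simp: space_PiM not_le) (use leD in blast)
    finally show "1 - 2 * real CARD('e) * exp (- 2 * real t * \<eta>\<^sup>2)
        \<le> prob {\<omega>. \<forall>x. \<bar>freq (map \<omega> [0..<t]) x - pmf P x\<bar> < \<eta>}" .
  qed
qed (simp add: prob_space.prob_le_1[OF prob_space_PiM[OF measure_pmf.prob_space_axioms]])

section \<open>Convergence of the root attribute\<close>

lemma Ginf_less_Ginf_dt_root:
  assumes distinct: "\<And>i j. i \<noteq> j \<Longrightarrow> Ginf P i \<noteq> Ginf P j" and "i \<noteq> dt_root P"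
  shows "Ginf P i < Ginf P (dt_root P)"
proof -
  have "Max (range (Ginf P)) \<in> range (Ginf P)" by (rule Max_in) auto
  then obtain d where "Ginf P d = Max (range (Ginf P))" by (metis imageE)
  then have "Ginf P (dt_root P) = Max (range (Ginf P))"
    unfolding dt_root_def by (metis arg_max_equality Max_ge finite_imageI finite rangeI)
  then show ?thesis
    using distinct[OF \<open>i \<noteq> dt_root P\<close>] by (metis Max_ge finite_imageI finite rangeI order_less_le)
qed

lemma dt_root_gain_gap:
  assumes distinct: "\<And>i j. i \<noteq> j \<Longrightarrow> Ginf P i \<noteq> Ginf P j" and pos: "0 < Ginf P (dt_root P)"
  obtains \<Delta> where "\<Delta> > 0" "\<Delta> \<le> Ginf P (dt_root P)"
    "\<And>i. i \<noteq> dt_root P \<Longrightarrow> \<Delta> \<le> Ginf P (dt_root P) - Ginf P i"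
proof
  define gap where "gap i = (if i = dt_root P then Ginf P i else Ginf P (dt_root P) - Ginf P i)" for i
  have "gap i > 0" for i
    using Ginf_less_Ginf_dt_root[OF distinct, of i] pos by (auto simp: gap_def)
  then show "Min (range gap) > 0" using Min_in[of "range gap"] by force
  show "Min (range gap) \<le> Ginf P (dt_root P)" using Min_le[of "range gap" "gap (dt_root P)"]
    by (simp add: gap_def)
  show "Min (range gap) \<le> Ginf P (dt_root P) - Ginf P i" if "i \<noteq> dt_root P" for i
    using Min_le[of "range gap" "gap i"] that by (simp add: gap_def)
qed

lemma hoeff_eps_tendsto_0:
  assumes "0 < \<delta>" "\<delta> < 1"
  shows "hoeff_eps TYPE('c::finite) \<delta> \<longlonglongrightarrow> 0"
proof -
  define c where "c = (Rng TYPE('c))\<^sup>2 * ln (1 / \<delta>)"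
  have "c \<ge> 0" using assms by (simp add: c_def)
  have "hoeff_eps TYPE('c) \<delta> = (\<lambda>t. sqrt (c / (2 * real t)))"
    by (simp add: hoeff_eps_def c_def fun_eq_iff)
  moreover have "(\<lambda>t. sqrt (c / (2 * real t))) \<longlonglongrightarrow> 0"
  proof (cases "c = 0")
    case False
    with \<open>c \<ge> 0\<close> show ?thesis by real_asymp
  qed simp
  ultimately show ?thesis by simp
qed

lemma clear_winner_if_gains_close:
  fixes S :: "('a::finite, 'v::finite, 'c::finite) example list"
  assumes eps: "hoeff_eps TYPE('c) \<delta> (length S) < \<Delta> / 3"
    and top: "\<Delta> \<le> Ginf P d" and gap: "\<And>i. i \<noteq> d \<Longrightarrow> \<Delta> \<le> Ginf P d - Ginf P i"
    and gains: "\<And>i. \<bar>Gbar S i - Ginf P i\<bar> < \<Delta> / 3"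
  shows "clear_winner \<delta> d S"
  unfolding clear_winner_def
proof (intro conjI allI impI)
  show "hoeff_eps TYPE('c) \<delta> (length S) < Gbar S d"
    using eps top gains[of d] by linarith
  fix i assume "i \<noteq> d"
  then show "Gbar S i + hoeff_eps TYPE('c) \<delta> (length S) < Gbar S d"
    using eps gap[of i] gains[of i] gains[of d] by linarith
qed

lemma eventually_root_attr_hatt_eq_dt_root:
  fixes P :: "('a::finite, 'v::finite, 'c::finite) example pmf"
  assumes "0 < \<delta>" "\<delta> < 1"
    and distinct: "\<And>i j. i \<noteq> j \<Longrightarrow> Ginf P i \<noteq> Ginf P j" and pos: "0 < Ginf P (dt_root P)"
  obtains \<eta> where "\<eta> > 0" "\<forall>\<^sub>F t in sequentially. \<forall>\<omega>.
      (\<forall>x. \<bar>freq (map \<omega> [0..<t]) x - pmf P x\<bar> < \<eta>) \<longrightarrow> root_attr (hatt \<delta> \<omega> t) = Some (dt_root P)"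
proof -
  obtain \<Delta> where "\<Delta> > 0" and top: "\<Delta> \<le> Ginf P (dt_root P)"
    and gap: "\<And>i. i \<noteq> dt_root P \<Longrightarrow> \<Delta> \<le> Ginf P (dt_root P) - Ginf P i"
    using dt_root_gain_gap[OF distinct pos] by blast
  obtain \<eta> where "\<eta> > 0" and close: "\<And>q. \<forall>x. \<bar>q x - pmf P x\<bar> < \<eta> \<Longrightarrow>
      \<forall>i. \<bar>igain_weights q i - Ginf P i\<bar> < \<Delta> / 3"
    using igain_weights_uniformly_close[of "\<Delta> / 3" "pmf P"] \<open>\<Delta> > 0\<close>
    by (auto simp: Ginf_eq_igain_weights)
  have "\<forall>\<^sub>F t in sequentially. hoeff_eps TYPE('c) \<delta> t < \<Delta> / 3 \<and> t \<ge> 1"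
    using order_tendstoD(2)[OF hoeff_eps_tendsto_0[OF assms(1,2), where 'c = 'c], of "\<Delta> / 3"] \<open>\<Delta> > 0\<close>
    by (intro eventually_conj eventually_ge_at_top) auto
  then have "\<forall>\<^sub>F t in sequentially. \<forall>\<omega>.
      (\<forall>x. \<bar>freq (map \<omega> [0..<t]) x - pmf P x\<bar> < \<eta>) \<longrightarrow> root_attr (hatt \<delta> \<omega> t) = Some (dt_root P)"
  proof (rule eventually_mono, intro allI impI)
    fix t \<omega>
    assume t: "hoeff_eps TYPE('c) \<delta> t < \<Delta> / 3 \<and> t \<ge> 1"
      and freq_close: "\<forall>x. \<bar>freq (map \<omega> [0..<t]) x - pmf P x\<bar> < \<eta>"
    then obtain t' where "t = Suc t'" by (cases t) auto
    define S where "S = map \<omega> [0..<t]"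
    have gains: "\<bar>Gbar S i - Ginf P i\<bar> < \<Delta> / 3" for i
      using close[OF freq_close] Gbar_eq_igain_weights_freq[of S] \<open>t = Suc t'\<close> by (simp add: S_def)
    have "hoeff_eps TYPE('c) \<delta> (length S) < \<Delta> / 3" using t by (simp add: S_def)
    then have "clear_winner \<delta> (dt_root P) S" using top gap gains by (rule clear_winner_if_gains_close)
    then show "root_attr (hatt \<delta> \<omega> t) = Some (dt_root P)"
      using root_attr_hatt_clear_winner assms(1,2) \<open>t = Suc t'\<close> by (simp add: S_def)
  qed
  with \<open>\<eta> > 0\<close> show ?thesis by (rule that)
qed

theorem lemma2:
  fixes P :: "('a::finite, 'v::finite, 'c::finite) example pmf" and \<delta> :: real
  assumes "0 < \<delta>" and "\<delta> < 1"
    and "\<And>i j. i \<noteq> j \<Longrightarrow> Ginf P i \<noteq> Ginf P j"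
    and "0 < Ginf P (dt_root P)"
  shows "(\<lambda>t. measure (PiM UNIV (\<lambda>_::nat. measure_pmf P))
            {\<omega>. root_attr (hatt \<delta> \<omega> t) = Some (dt_root P)}) \<longlonglongrightarrow> 1"
proof -
  let ?M = "PiM UNIV (\<lambda>_::nat. measure_pmf P)"
  interpret prob_space ?M by (rule prob_space_PiM) (rule measure_pmf.prob_space_axioms)
  obtain \<eta> where "\<eta> > 0" and root: "\<forall>\<^sub>F t in sequentially. \<forall>\<omega>.
      (\<forall>x. \<bar>freq (map \<omega> [0..<t]) x - pmf P x\<bar> < \<eta>) \<longrightarrow> root_attr (hatt \<delta> \<omega> t) = Some (dt_root P)"
    using eventually_root_attr_hatt_eq_dt_root[OF assms] by blast
  have "\<forall>\<^sub>F t in sequentially. prob {\<omega>. \<forall>x. \<bar>freq (map \<omega> [0..<t]) x - pmf P x\<bar> < \<eta>}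
      \<le> prob {\<omega>. root_attr (hatt \<delta> \<omega> t) = Some (dt_root P)}"
    using root
  proof eventually_elim
    case (elim t)
    have "{\<omega>. root_attr (hatt \<delta> \<omega> t) = Some (dt_root P)} \<in> events"
      unfolding hatt_def by (rule sets_prefix_event)
    with elim show ?case by (intro finite_measure_mono) auto
  qed
  then show ?thesis
    by (rule tendsto_sandwich[OF _ _ prob_freq_prefix_close_tendsto_1[OF \<open>\<eta> > 0\<close>] tendsto_const])
      (simp add: prob_le_1)
qed

end
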